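(* Let $a,b\in\mathbb{Q}_3$ be nonzero, with $3$-adic valuations $\gamma(a)$ and $\gamma(b)$ (so $|a|_3=3^{-\gamma(a)}$, $|b|_3=3^{-\gamma(b)}$). Suppose one of the following holds: 1) $\gamma(a)=0$ and $\gamma(b)<0$; 2) $\gamma(a)>0$ and $\gamma(b)>0$; 3) $\gamma(a)>0$ and $\gamma(b)<0$; 4) $\gamma(a)<0$ and $\gamma(b)=0$; 5) $\gamma(a)<0$ and $\gamma(b)>0$. Then the equation $x^3+ax=b$ has no solution $x\in\mathbb{Z}_3^*$.
   Context: $\mathbb{Z}_3^*$ denotes the set of $3$-adic units, i.e. $x\in\mathbb{Q}_3$ with $|x|_3=1$. *)

theory Defs
  imports Complex_Main "HOL-Computational_Algebra.Fraction_Field" "HOL-Computational_Algebra.Primes"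
begin

text \<open>A 3-adic integer is represented by a coherent sequence of integers f,
  where f n is a residue modulo 3^n and f (Suc n) is congruent to f n modulo 3^n.\<close>

definition coh3 :: "(nat \<Rightarrow> int) \<Rightarrow> bool" where
  "coh3 f \<longleftrightarrow> (\<forall>n. (3::int) ^ n dvd (f (Suc n) - f n))"

definition z3_rel :: "(nat \<Rightarrow> int) \<Rightarrow> (nat \<Rightarrow> int) \<Rightarrow> bool" where
  "z3_rel f g \<longleftrightarrow> coh3 f \<and> coh3 g \<and> (\<forall>n. (3::int) ^ n dvd (f n - g n))"

lemma z3_rel_part_equivp: "part_equivp z3_rel"
proof (rule part_equivpI)
  show "\<exists>x. z3_rel x x" by (rule exI[of _ "\<lambda>_. 0"]) (simp add: z3_rel_def coh3_def)
  show "symp z3_rel"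
    unfolding symp_def z3_rel_def by (metis dvd_minus_iff minus_diff_eq)
  show "transp z3_rel"
    unfolding transp_def z3_rel_def
  proof (intro allI impI, elim conjE, intro conjI allI)
    fix x y z n
    assume "\<forall>n. (3::int) ^ n dvd x n - y n" "\<forall>n. (3::int) ^ n dvd y n - z n"
    then have "(3::int) ^ n dvd (x n - y n) + (y n - z n)" by (intro dvd_add) auto
    moreover have "x n - z n = (x n - y n) + (y n - z n)" by simp
    ultimately show "(3::int) ^ n dvd x n - z n" by metis
  qed
qed

quotient_type z3 = "nat \<Rightarrow> int" / partial: z3_rel
  by (rule z3_rel_part_equivp)

lemma coh3_add: "coh3 f \<Longrightarrow> coh3 g \<Longrightarrow> coh3 (\<lambda>n. f n + g n)"
  unfolding coh3_def
proof
  fix n assume "\<forall>n. (3::int) ^ n dvd f (Suc n) - f n" "\<forall>n. (3::int) ^ n dvd g (Suc n) - g n"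
  then have "(3::int) ^ n dvd (f (Suc n) - f n) + (g (Suc n) - g n)" by (simp add: dvd_add)
  then show "(3::int) ^ n dvd f (Suc n) + g (Suc n) - (f n + g n)" by (simp add: algebra_simps)
qed

lemma coh3_mult: "coh3 f \<Longrightarrow> coh3 g \<Longrightarrow> coh3 (\<lambda>n. f n * g n)"
  unfolding coh3_def
proof
  fix n assume a: "\<forall>n. (3::int) ^ n dvd f (Suc n) - f n" "\<forall>n. (3::int) ^ n dvd g (Suc n) - g n"
  have "f (Suc n) * g (Suc n) - f n * g n
        = (f (Suc n) - f n) * g (Suc n) + f n * (g (Suc n) - g n)" by (simp add: algebra_simps)
  moreover have "(3::int) ^ n dvd (f (Suc n) - f n) * g (Suc n) + f n * (g (Suc n) - g n)"
    using a by (intro dvd_add dvd_mult2 dvd_mult) auto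
  ultimately show "(3::int) ^ n dvd f (Suc n) * g (Suc n) - f n * g n" by simp
qed

lemma coh3_uminus: "coh3 f \<Longrightarrow> coh3 (\<lambda>n. - f n)"
  unfolding coh3_def by (metis dvd_minus_iff minus_diff_minus)

lemma coh3_diff: "coh3 f \<Longrightarrow> coh3 g \<Longrightarrow> coh3 (\<lambda>n. f n - g n)"
  using coh3_add[of f "\<lambda>n. - g n"] coh3_uminus[of g] by simp

lemmas coh3_intros = coh3_add coh3_mult coh3_uminus coh3_diff

instantiation z3 :: comm_ring_1
begin

lift_definition zero_z3 :: z3 is "\<lambda>_. 0" by (simp add: z3_rel_def coh3_def)
lift_definition one_z3 :: z3 is "\<lambda>_. 1" by (simp add: z3_rel_def coh3_def)

lift_definition plus_z3 :: "z3 \<Rightarrow> z3 \<Rightarrow> z3" is "\<lambda>f g n. f n + g n"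
proof -
  fix f1 f2 g1 g2 assume A: "z3_rel f1 f2" "z3_rel g1 g2"
  show "z3_rel (\<lambda>n. f1 n + g1 n) (\<lambda>n. f2 n + g2 n)"
    unfolding z3_rel_def
  proof (intro conjI allI)
    show "coh3 (\<lambda>n. f1 n + g1 n)" "coh3 (\<lambda>n. f2 n + g2 n)"
      using A by (auto simp: z3_rel_def intro: coh3_add)
    fix n
    have "(3::int) ^ n dvd (f1 n - f2 n) + (g1 n - g2 n)"
      using A by (auto simp: z3_rel_def intro: dvd_add)
    then show "(3::int) ^ n dvd f1 n + g1 n - (f2 n + g2 n)" by (simp add: algebra_simps)
  qed
qed

lift_definition uminus_z3 :: "z3 \<Rightarrow> z3" is "\<lambda>f n. - f n"
proof -
  fix f1 f2 assume A: "z3_rel f1 f2"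
  show "z3_rel (\<lambda>n. - f1 n) (\<lambda>n. - f2 n)"
    unfolding z3_rel_def
  proof (intro conjI allI)
    show "coh3 (\<lambda>n. - f1 n)" "coh3 (\<lambda>n. - f2 n)"
      using A by (auto simp: z3_rel_def intro: coh3_uminus)
    fix n
    show "(3::int) ^ n dvd - f1 n - - f2 n"
      using A unfolding z3_rel_def by (metis dvd_minus_iff minus_diff_minus)
  qed
qed

lift_definition minus_z3 :: "z3 \<Rightarrow> z3 \<Rightarrow> z3" is "\<lambda>f g n. f n - g n"
proof -
  fix f1 f2 g1 g2 assume A: "z3_rel f1 f2" "z3_rel g1 g2"
  show "z3_rel (\<lambda>n. f1 n - g1 n) (\<lambda>n. f2 n - g2 n)"
    unfolding z3_rel_def
  proof (intro conjI allI)
    show "coh3 (\<lambda>n. f1 n - g1 n)" "coh3 (\<lambda>n. f2 n - g2 n)"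
      using A by (auto simp: z3_rel_def intro: coh3_diff)
    fix n
    have "(3::int) ^ n dvd (f1 n - f2 n) - (g1 n - g2 n)"
      using A by (auto simp: z3_rel_def intro: dvd_diff)
    then show "(3::int) ^ n dvd f1 n - g1 n - (f2 n - g2 n)" by (simp add: algebra_simps)
  qed
qed

lift_definition times_z3 :: "z3 \<Rightarrow> z3 \<Rightarrow> z3" is "\<lambda>f g n. f n * g n"
proof -
  fix f1 f2 g1 g2 assume A: "z3_rel f1 f2" "z3_rel g1 g2"
  show "z3_rel (\<lambda>n. f1 n * g1 n) (\<lambda>n. f2 n * g2 n)"
    unfolding z3_rel_def
  proof (intro conjI allI)
    show "coh3 (\<lambda>n. f1 n * g1 n)" "coh3 (\<lambda>n. f2 n * g2 n)"
      using A by (auto simp: z3_rel_def intro: coh3_mult)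
    fix n
    have "f1 n * g1 n - f2 n * g2 n = (f1 n - f2 n) * g1 n + f2 n * (g1 n - g2 n)"
      by (simp add: algebra_simps)
    moreover have "(3::int) ^ n dvd (f1 n - f2 n) * g1 n + f2 n * (g1 n - g2 n)"
      using A unfolding z3_rel_def by (intro dvd_add dvd_mult2 dvd_mult) auto
    ultimately show "(3::int) ^ n dvd f1 n * g1 n - f2 n * g2 n" by simp
  qed
qed

instance
proof
  fix a b c :: z3
  show "a + b + c = a + (b + c)" by transfer (auto simp: z3_rel_def algebra_simps intro!: coh3_intros)
  show "a + b = b + a" by transfer (auto simp: z3_rel_def algebra_simps intro!: coh3_intros)
  show "0 + a = a" by transfer (auto simp: coh3_def z3_rel_def algebra_simps intro!: coh3_intros)
  show "- a + a = 0" by transfer (auto simp: coh3_def z3_rel_def algebra_simps intro!: coh3_intros)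
  show "a - b = a + - b" by transfer (auto simp: z3_rel_def algebra_simps intro!: coh3_intros)
  show "a * b * c = a * (b * c)" by transfer (auto simp: z3_rel_def algebra_simps intro!: coh3_intros)
  show "a * b = b * a" by transfer (auto simp: z3_rel_def algebra_simps intro!: coh3_intros)
  show "1 * a = a" by transfer (auto simp: z3_rel_def algebra_simps intro!: coh3_intros)
  show "(a + b) * c = a * c + b * c" by transfer (auto simp: z3_rel_def algebra_simps intro!: coh3_intros)
  show "(0::z3) \<noteq> 1"
  proof transfer
    show "\<not> z3_rel (\<lambda>_. 0) (\<lambda>_. 1)"
    proof
      assume "z3_rel (\<lambda>_. 0) (\<lambda>_. 1)"
      then have "(3::int) ^ 1 dvd 0 - 1" unfolding z3_rel_def by blast
      then show False by simp
    qed
  qed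
qed

end

lemma coh3_le: "coh3 f \<Longrightarrow> n \<le> m \<Longrightarrow> (3::int) ^ n dvd (f m - f n)"
proof (induction m)
  case 0 then show ?case by simp
next
  case (Suc m)
  show ?case
  proof (cases "n = Suc m")
    case True then show ?thesis by simp
  next
    case False
    then have "n \<le> m" using Suc.prems by simp
    then have h1: "(3::int) ^ n dvd f m - f n" using Suc by simp
    have "(3::int) ^ m dvd f (Suc m) - f m" using Suc.prems unfolding coh3_def by simp
    moreover have "(3::int) ^ n dvd 3 ^ m" using \<open>n \<le> m\<close> by (simp add: le_imp_power_dvd)
    ultimately have h2: "(3::int) ^ n dvd f (Suc m) - f m" by (rule dvd_trans[rotated])
    have "(3::int) ^ n dvd (f (Suc m) - f m) + (f m - f n)" using h1 h2 by (rule dvd_add[rotated])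
    then show ?thesis by simp
  qed
qed

lemma three_pow_mult_not_dvd:
  "\<not> (3::int)^i dvd x \<Longrightarrow> \<not> (3::int)^j dvd y \<Longrightarrow> \<not> (3::int)^(i+j) dvd x*y"
proof
  assume a: "\<not> (3::int)^i dvd x" "\<not> (3::int)^j dvd y" "(3::int)^(i+j) dvd x*y"
  have p: "prime (3::int)" by simp
  have "x \<noteq> 0" "y \<noteq> 0" using a by auto
  then have "multiplicity 3 x < i" "multiplicity 3 y < j"
    using a by (auto simp: power_dvd_iff_le_multiplicity not_le)
  moreover have "i + j \<le> multiplicity 3 (x*y)"
    using a \<open>x\<noteq>0\<close> \<open>y\<noteq>0\<close> by (simp add: power_dvd_iff_le_multiplicity)
  moreover have "multiplicity 3 (x*y) = multiplicity 3 x + multiplicity 3 y"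
    using p \<open>x\<noteq>0\<close> \<open>y\<noteq>0\<close> by (simp add: prime_elem_multiplicity_mult_distrib)
  ultimately show False by simp
qed

lemma coh3_not_dvd_up:
  assumes "coh3 f" "\<not> (3::int)^i dvd f i" "i \<le> N"
  shows "\<not> (3::int)^i dvd f N"
proof
  assume "(3::int)^i dvd f N"
  moreover have "(3::int)^i dvd f N - f i" using coh3_le[OF assms(1,3)] .
  ultimately have "(3::int)^i dvd f N - (f N - f i)" by (rule dvd_diff)
  then show False using assms(2) by simp
qed

instance z3 :: idom
proof
  fix a b :: z3
  have "a * b = 0 \<Longrightarrow> a = 0 \<or> b = 0"
  proof (transfer, goal_cases)
    case (1 f g)
    then have f: "z3_rel f f" and g: "z3_rel g g" and fg: "z3_rel (\<lambda>n. f n * g n) (\<lambda>_. 0)"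
      by auto
    show ?case
    proof (rule ccontr)
      assume "\<not> ?thesis"
      then obtain i j where i: "\<not> (3::int)^i dvd f i" and j: "\<not> (3::int)^j dvd g j"
        using f g by (auto simp: z3_rel_def coh3_def)
      have "\<not> (3::int)^i dvd f (i+j)" using coh3_not_dvd_up[of f i "i+j"] i f by (simp add: z3_rel_def)
      moreover have "\<not> (3::int)^j dvd g (i+j)" using coh3_not_dvd_up[of g j "i+j"] j g by (simp add: z3_rel_def)
      ultimately have "\<not> (3::int)^(i+j) dvd f (i+j) * g (i+j)" by (rule three_pow_mult_not_dvd)
      then show False using fg by (simp add: z3_rel_def)
    qed
  qed
  then show "a \<noteq> 0 \<Longrightarrow> b \<noteq> 0 \<Longrightarrow> a * b \<noteq> 0" by blast
qed

type_synonym q3 = "z3 fract"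

text \<open>The 3-adic valuation gamma: for nonzero a in Q_3, gamma a is the unique integer k
  with a = 3^k * u for a unit u of Z_3, so that the 3-adic absolute value is 3^(-gamma a).
  (The value at 0 is irrelevant.)\<close>

definition val3 :: "q3 \<Rightarrow> int" where
  "val3 a = (THE k. \<exists>u::z3. u dvd 1 \<and> a = (3::q3) powi k * Fract u 1)"

definition Z3_units :: "q3 set" where
  "Z3_units = {x. x \<noteq> 0 \<and> val3 x = 0}"

end

theory Submission
  imports Defs "HOL-Computational_Algebra.Polynomial_Factorial"
begin

text \<open>Every nonzero a in Q_3 factors as 3 powi k times a unit of Z_3 with k unique, so val3 a = k;
  the factorization rests on two facts about Z_3: an element not divisible by 3 is a unit
  (its residues can be inverted modulo every 3^n), and only 0 is divisible by every power of 3.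
  Then val3 is additive on products and satisfies the ultrametric inequality.
  For a unit x with x^3 + a x = b, the three terms x^3, a x and -b sum to zero and have
  valuations 0, val3 a and val3 b; each of the five hypotheses says that the least of these is
  attained exactly once, which the ultrametric inequality forbids.\<close>

section \<open>Units of Z_3\<close>

lift_definition res3 :: "z3 \<Rightarrow> int" is "\<lambda>f. f 1 mod 3"
  unfolding z3_rel_def by (metis mod_eq_dvd_iff power_one_right)

lemma div3_coherent:
  assumes "(3::int) ^ Suc k dvd x - y"
  shows "(3::int) ^ k dvd x div 3 - y div 3"
proof -
  have "3 dvd x - y"
    using assms by (simp add: dvd_mult_left)
  then have "x mod 3 = y mod 3"
    by (simp add: mod_eq_dvd_iff)
  have "x - y = (3 * (x div 3) + x mod 3) - (3 * (y div 3) + y mod 3)"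
    by simp
  also have "\<dots> = 3 * (x div 3 - y div 3)"
    using \<open>x mod 3 = y mod 3\<close> by (simp add: algebra_simps)
  finally have "x - y = 3 * (x div 3 - y div 3)" .
  with assms have "3 * 3 ^ k dvd 3 * (x div 3 - y div 3)"
    by simp
  then show ?thesis
    by (subst (asm) dvd_mult_cancel_left) simp
qed

lift_definition div3 :: "z3 \<Rightarrow> z3" is "\<lambda>f n. f (Suc n) div 3"
  unfolding z3_rel_def coh3_def by (auto intro: div3_coherent)

text \<open>Numerals of z3 are invisible to transfer; 1 + 1 + 1 and pow3 are their transferable forms.\<close>

lift_definition pow3 :: "nat \<Rightarrow> z3" is "\<lambda>k _. 3 ^ k"
  unfolding z3_rel_def coh3_def by simp

lemma three_z3_eq: "(3::z3) = 1 + 1 + 1"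
  by simp

lemma pow3_eq_power: "pow3 k = 3 ^ k"
proof (induction k)
  case 0
  have "pow3 0 = 1" by transfer (simp add: z3_rel_def coh3_def)
  then show ?case by simp
next
  case (Suc k)
  have "pow3 (Suc k) = (1 + 1 + 1) * pow3 k"
    by transfer (simp add: z3_rel_def coh3_def)
  then show ?case using Suc by simp
qed

lemma res3_1 [simp]: "res3 1 = 1"
  by transfer simp

lemma res3_three_mult: "res3 (3 * z) = 0"
  unfolding three_z3_eq by transfer simp

lemma three_mult_div3:
  assumes "res3 z = 0"
  shows "3 * div3 z = z"
  using assms unfolding three_z3_eq
proof transfer
  fix f assume f: "z3_rel f f" "f 1 mod 3 = 0"
  then have coh: "coh3 f" by (simp add: z3_rel_def)
  have "(3::int) dvd f (Suc n)" for n
  proof -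
    have "(3::int) dvd f (Suc n) - f 1"
      using coh3_le[OF coh, of 1 "Suc n"] by simp
    moreover have "(3::int) dvd f 1"
      using f(2) by (rule mod_0_imp_dvd)
    ultimately have "(3::int) dvd (f (Suc n) - f 1) + f 1"
      by (rule dvd_add)
    then show ?thesis by simp
  qed
  then have f_Suc: "(1 + 1 + 1) * (f (Suc n) div 3) = f (Suc n)" for n
    by simp
  have "coh3 (\<lambda>n. f (Suc n))"
    unfolding coh3_def
  proof
    fix n
    have "(3::int) ^ Suc n dvd f (Suc (Suc n)) - f (Suc n)"
      using coh unfolding coh3_def by blast
    then show "(3::int) ^ n dvd f (Suc (Suc n)) - f (Suc n)"
      by (rule dvd_trans[rotated]) (simp add: le_imp_power_dvd)
  qed
  moreover have "(3::int) ^ n dvd f (Suc n) - f n" for n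
    using coh by (simp add: coh3_def)
  ultimately have "z3_rel (\<lambda>n. f (Suc n)) f"
    using coh unfolding z3_rel_def by blast
  then show "z3_rel (\<lambda>n. (1 + 1 + 1) * (f (Suc n) div 3)) f"
    unfolding f_Suc .
qed

lemma three_dvd_iff_res3: "(3::z3) dvd z \<longleftrightarrow> res3 z = 0"
proof
  assume "3 dvd z"
  then show "res3 z = 0" using res3_three_mult by (auto elim: dvdE)
next
  assume "res3 z = 0"
  then have "3 * div3 z = z" by (rule three_mult_div3)
  then show "3 dvd z" by (metis dvdI)
qed

text \<open>A coherent sequence prime to 3 at level 1 is prime to 3 at every level, so Bezout inverts
  it modulo each 3^n; the inverses are coherent because f is.\<close>

lemma coh3_inverse:
  assumes coh: "coh3 f" and f1: "\<not> (3::int) dvd f 1"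
  shows "\<exists>g. coh3 g \<and> (\<forall>n. (3::int) ^ n dvd f n * g n - 1)"
proof -
  have coprime: "coprime (f n) ((3::int) ^ n)" for n
  proof (cases "n = 0")
    case False
    have "\<not> (3::int) dvd f n"
    proof
      assume "(3::int) dvd f n"
      moreover have "(3::int) dvd f n - f 1"
        using coh3_le[OF coh, of 1 n] False by simp
      ultimately have "(3::int) dvd f n - (f n - f 1)"
        by (rule dvd_diff)
      with f1 show False by simp
    qed
    then have "coprime 3 (f n)"
      by (intro prime_imp_coprime) auto
    then show ?thesis
      by (simp add: coprime_commute)
  qed simp
  have "\<forall>n. \<exists>y. (3::int) ^ n dvd f n * y - 1"
  proof
    fix n
    obtain u v where "u * f n + v * 3 ^ n = gcd (f n) ((3::int) ^ n)"
      using bezout_int by blast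
    with coprime[of n] have "f n * u - 1 = 3 ^ n * (- v)"
      by (simp add: algebra_simps)
    then have "(3::int) ^ n dvd f n * u - 1"
      by simp
    then show "\<exists>y. (3::int) ^ n dvd f n * y - 1" ..
  qed
  from choice[OF this] obtain g where g: "\<And>n. (3::int) ^ n dvd f n * g n - 1"
    by blast
  have "coh3 g"
    unfolding coh3_def
  proof
    fix n
    have "(3::int) ^ n dvd f n - f (Suc n)"
      using coh by (simp add: coh3_def dvd_diff_commute)
    then have step: "(3::int) ^ n dvd (f n - f (Suc n)) * g (Suc n)"
      by (rule dvd_mult2)
    have next_inverse: "(3::int) ^ n dvd f (Suc n) * g (Suc n) - 1"
      by (rule dvd_trans[OF le_imp_power_dvd g]) simp
    have "(3::int) ^ n dvd (f n - f (Suc n)) * g (Suc n) + (f (Suc n) * g (Suc n) - 1) - (f n * g n - 1)"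
      by (rule dvd_diff[OF dvd_add[OF step next_inverse] g])
    also have "(f n - f (Suc n)) * g (Suc n) + (f (Suc n) * g (Suc n) - 1) - (f n * g n - 1)
        = f n * (g (Suc n) - g n)"
      by (simp add: algebra_simps)
    finally show "(3::int) ^ n dvd g (Suc n) - g n"
      using coprime_dvd_mult_right_iff[of "3 ^ n" "f n"] coprime[of n] by (simp add: coprime_commute)
  qed
  with g show ?thesis by blast
qed

lemma res3_neq_0_imp_unit:
  assumes "res3 u \<noteq> 0"
  shows "u dvd 1"
  using assms unfolding dvd_def
proof transfer
  fix f assume f: "z3_rel f f" "f 1 mod 3 \<noteq> 0"
  then have coh: "coh3 f"
    by (simp add: z3_rel_def)
  obtain g where g: "coh3 g" "\<And>n. (3::int) ^ n dvd f n * g n - 1"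
    using coh3_inverse[OF coh] f(2) by (auto simp: dvd_eq_mod_eq_0)
  have "z3_rel (\<lambda>_. 1) (\<lambda>n. f n * g n)"
    unfolding z3_rel_def using coh3_mult[OF coh g(1)] g(2)
    by (simp add: coh3_def dvd_diff_commute)
  with g(1) show "\<exists>g \<in> {x. z3_rel x x}. z3_rel (\<lambda>_. 1) (\<lambda>n. f n * g n)"
    by (auto simp: z3_rel_def)
qed

lemma z3_unit_iff: "(u::z3) dvd 1 \<longleftrightarrow> \<not> 3 dvd u"
proof
  assume "u dvd 1"
  show "\<not> 3 dvd u"
  proof
    assume "3 dvd u"
    then have "3 dvd (1::z3)"
      using \<open>u dvd 1\<close> by (rule dvd_trans)
    then show False
      by (simp add: three_dvd_iff_res3)
  qed
next
  assume "\<not> 3 dvd u"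
  then show "u dvd 1"
    by (simp add: three_dvd_iff_res3 res3_neq_0_imp_unit)
qed

lemma z3_eq_0_if_power_dvd:
  assumes "\<And>n. (3::z3) ^ n dvd z"
  shows "z = 0"
  using assms unfolding pow3_eq_power[symmetric] dvd_def
proof transfer
  fix f assume f: "z3_rel f f" "\<And>n. \<exists>g\<in>{x. z3_rel x x}. z3_rel f (\<lambda>k. 3 ^ n * g k)"
  have "(3::int) ^ n dvd f n" for n
  proof -
    obtain g where "z3_rel f (\<lambda>k. 3 ^ n * g k)"
      using f(2) by blast
    then have "(3::int) ^ n dvd (f n - 3 ^ n * g n) + 3 ^ n * g n"
      unfolding z3_rel_def by (intro dvd_add) auto
    then show ?thesis by simp
  qed
  with f(1) show "z3_rel f (\<lambda>_. 0)"
    by (simp add: z3_rel_def coh3_def)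
qed

lemma z3_factor_power_unit:
  assumes "(z::z3) \<noteq> 0"
  obtains m u where "u dvd 1" "z = 3 ^ m * u"
proof -
  have "\<exists>m u. u dvd 1 \<and> z = 3 ^ m * u" if "\<not> (3::z3) ^ n dvd z" for n z
    using that
  proof (induction n arbitrary: z)
    case (Suc n)
    show ?case
    proof (cases "3 dvd z")
      case False
      then have "z dvd 1"
        using z3_unit_iff by blast
      then show ?thesis
        by (intro exI[of _ 0] exI[of _ z]) simp
    next
      case True
      then obtain w where w: "z = 3 * w" ..
      have "\<not> 3 ^ n dvd w"
      proof
        assume "3 ^ n dvd w"
        then have "3 * 3 ^ n dvd 3 * w"
          by (rule mult_dvd_mono[OF dvd_refl])
        then have "3 ^ Suc n dvd z"
          by (simp only: w power_Suc)
        with Suc.prems show False ..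
      qed
      then obtain m u where "u dvd 1" "w = 3 ^ m * u"
        using Suc.IH by blast
      moreover from this w have "z = 3 ^ Suc m * u"
        by (simp only: power_Suc mult.assoc)
      ultimately show ?thesis
        by blast
    qed
  qed simp
  moreover obtain n where "\<not> (3::z3) ^ n dvd z"
    using z3_eq_0_if_power_dvd assms by blast
  ultimately show ?thesis
    using that by blast
qed

section \<open>The 3-adic valuation\<close>

lemma three_z3_neq_0: "(3::z3) \<noteq> 0"
  unfolding three_z3_eq
proof transfer
  show "\<not> z3_rel (\<lambda>_. 1 + 1 + 1) (\<lambda>_. 0)"
  proof
    assume "z3_rel (\<lambda>_. 1 + 1 + 1) (\<lambda>_. 0)"
    then have "(3::int) ^ 2 dvd 1 + 1 + 1 - 0"
      unfolding z3_rel_def by blast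
    then show False by simp
  qed
qed

lemma to_fract_power: "to_fract (x ^ n) = to_fract x ^ n"
  by (induction n) simp_all

lemma to_fract_numeral: "to_fract (numeral k) = numeral k"
  using of_nat_fract[of "numeral k"] by (simp add: to_fract_def)

lemma three_q3_neq_0: "(3::q3) \<noteq> 0"
  using three_z3_neq_0 by (metis to_fract_eq_0_iff to_fract_numeral)

lemma power_int_split:
  fixes x :: "'a::field"
  assumes "x \<noteq> 0" "k \<le> l"
  shows "x powi l = x powi k * x ^ nat (l - k)"
proof -
  have "x powi l = x powi (k + int (nat (l - k)))"
    using assms(2) by simp
  also have "\<dots> = x powi k * x powi int (nat (l - k))"
    using assms(1) by (rule power_int_add[OF disjI1])
  also have "\<dots> = x powi k * x ^ nat (l - k)"
    by (simp only: power_int_of_nat)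
  finally show ?thesis .
qed

lemma q3_factor_power_unit:
  assumes "(a::q3) \<noteq> 0"
  obtains k u where "u dvd 1" "a = 3 powi k * to_fract u"
proof -
  obtain p q where a: "a = Fract p q" and "q \<noteq> 0"
    by (cases a)
  moreover have "p \<noteq> 0"
    using assms a by (auto simp: Zero_fract_def eq_fract)
  ultimately obtain m u n v where u: "u dvd 1" "p = 3 ^ m * u" and v: "v dvd 1" "q = 3 ^ n * v"
    using z3_factor_power_unit by metis
  from v(1) obtain v' where v': "1 = v * v'" ..
  then have inv: "to_fract v' = inverse (to_fract v)"
    by (metis inverse_unique to_fract_1 to_fract_mult)
  have "a = (3 powi int m * to_fract u) / (3 powi int n * to_fract v)"
    using a u(2) v(2) by (simp add: Fract_conv_to_fract to_fract_power to_fract_numeral)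
  also have "\<dots> = 3 powi (int m - int n) * to_fract (u * v')"
    using three_q3_neq_0 inv
    by (simp add: power_int_diff divide_inverse inverse_mult_distrib mult_ac)
  finally have "a = 3 powi (int m - int n) * to_fract (u * v')" .
  moreover have "u * v' dvd 1"
  proof -
    have "v' dvd 1"
      using v' dvd_triv_right[of v' v] by simp
    then show ?thesis
      using mult_dvd_mono[OF u(1)] by fastforce
  qed
  ultimately show ?thesis
    using that by blast
qed

lemma power_int_three_times_unit_inj:
  assumes "u dvd 1" "v dvd 1" and eq: "(3::q3) powi k * to_fract u = 3 powi l * to_fract v"
  shows "k = l"
proof -
  have False if "k < l" "u dvd 1" "(3::q3) powi k * to_fract u = 3 powi l * to_fract v"
    for k l u v
  proof -
    have "(3::q3) powi k * to_fract u = 3 powi k * to_fract (3 ^ nat (l - k) * v)"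
      using that power_int_split[OF three_q3_neq_0, of k l]
      by (simp add: to_fract_power to_fract_numeral mult.assoc)
    moreover have "(3::q3) powi k \<noteq> 0"
      using three_q3_neq_0 by simp
    ultimately have "to_fract u = to_fract (3 ^ nat (l - k) * v)"
      by (rule mult_left_cancel[THEN iffD1, rotated])
    then have "u = 3 ^ nat (l - k) * v"
      by (simp only: to_fract_eq_iff)
    moreover have "(3::z3) dvd 3 ^ nat (l - k)"
      using \<open>k < l\<close> by (simp add: dvd_power)
    ultimately show False
      using \<open>u dvd 1\<close> z3_unit_iff by (metis dvd_mult2)
  qed
  with assms show ?thesis
    by (metis linorder_neqE)
qed

lemma val3_eqI:
  assumes "u dvd 1" "a = 3 powi k * to_fract u"
  shows "val3 a = k"
  unfolding val3_def
proof (rule the_equality)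
  show "\<exists>u. u dvd 1 \<and> a = 3 powi k * Fract u 1"
    using assms by (auto simp: to_fract_def)
next
  fix l assume "\<exists>v. v dvd 1 \<and> a = 3 powi l * Fract v 1"
  then show "l = k"
    using assms power_int_three_times_unit_inj by (metis to_fract_def)
qed

lemma val3_mult:
  assumes "(a::q3) \<noteq> 0" "b \<noteq> 0"
  shows "val3 (a * b) = val3 a + val3 b"
proof -
  obtain k u where u: "u dvd 1" "a = 3 powi k * to_fract u"
    using q3_factor_power_unit[OF assms(1)] .
  obtain l v where v: "v dvd 1" "b = 3 powi l * to_fract v"
    using q3_factor_power_unit[OF assms(2)] .
  have "a * b = 3 powi (k + l) * to_fract (u * v)"
    using u(2) v(2) three_q3_neq_0 by (simp add: power_int_add mult_ac)
  moreover have "u * v dvd 1"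
    using mult_dvd_mono[OF u(1) v(1)] by simp
  ultimately show ?thesis
    using val3_eqI u v by metis
qed

lemma val3_power:
  assumes "(a::q3) \<noteq> 0"
  shows "val3 (a ^ n) = int n * val3 a"
  by (induction n) (simp_all add: assms val3_mult val3_eqI[of 1 1 0] algebra_simps)

lemma val3_uminus: "val3 (- a) = val3 a"
proof (cases "a = 0")
  case False
  then obtain k u where "u dvd 1" "a = 3 powi k * to_fract u"
    by (rule q3_factor_power_unit)
  then show ?thesis
    using val3_eqI[of "- u"] val3_eqI[of u] by simp
qed simp

lemma val3_add_ge_left:
  assumes "(a::q3) \<noteq> 0" "b \<noteq> 0" "a + b \<noteq> 0" "val3 a \<le> val3 b"
  shows "val3 a \<le> val3 (a + b)"
proof -
  obtain k u where u: "u dvd 1" "a = 3 powi k * to_fract u"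
    using q3_factor_power_unit[OF assms(1)] .
  obtain l v where v: "v dvd 1" "b = 3 powi l * to_fract v"
    using q3_factor_power_unit[OF assms(2)] .
  have "k \<le> l"
    using assms(4) val3_eqI u v by metis
  define z where "z = u + 3 ^ nat (l - k) * v"
  have sum: "a + b = 3 powi k * to_fract z"
    using u(2) v(2) power_int_split[OF three_q3_neq_0 \<open>k \<le> l\<close>]
    by (simp add: z_def algebra_simps to_fract_power to_fract_numeral)
  with assms(3) have "z \<noteq> 0"
    by auto
  then obtain m w where "w dvd 1" "z = 3 ^ m * w"
    by (rule z3_factor_power_unit)
  with sum have "a + b = 3 powi (k + int m) * to_fract w"
    using three_q3_neq_0 by (simp add: power_int_add to_fract_power to_fract_numeral mult.assoc)
  then have "val3 (a + b) = k + int m"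
    using \<open>w dvd 1\<close> by (rule val3_eqI[rotated])
  moreover have "val3 a = k"
    using u by (rule val3_eqI)
  ultimately show ?thesis
    by simp
qed

lemma val3_add_ge:
  assumes "(a::q3) \<noteq> 0" "b \<noteq> 0" "a + b \<noteq> 0"
  shows "min (val3 a) (val3 b) \<le> val3 (a + b)"
  using val3_add_ge_left[OF assms] val3_add_ge_left[of b a] assms
  by (cases "val3 a \<le> val3 b") (simp_all add: add.commute)

theorem proposition3p1:
  fixes a b :: q3
  assumes "a \<noteq> 0" and "b \<noteq> 0"
    and "(val3 a = 0 \<and> val3 b < 0) \<or> (val3 a > 0 \<and> val3 b > 0) \<or>
         (val3 a > 0 \<and> val3 b < 0) \<or> (val3 a < 0 \<and> val3 b = 0) \<or>
         (val3 a < 0 \<and> val3 b > 0)"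
  shows "\<not> (\<exists>x \<in> Z3_units. x ^ 3 + a * x = b)"
proof
  assume "\<exists>x \<in> Z3_units. x ^ 3 + a * x = b"
  then obtain x where "x \<noteq> 0" "val3 x = 0" and eq: "x ^ 3 + a * x = b"
    unfolding Z3_units_def by blast
  then have nonzero: "x ^ 3 \<noteq> 0" "a * x \<noteq> 0"
    using assms(1) by simp_all
  have val_cube: "val3 (x ^ 3) = 0" and val_ax: "val3 (a * x) = val3 a"
    using \<open>x \<noteq> 0\<close> \<open>val3 x = 0\<close> assms(1) by (simp_all add: val3_power val3_mult)
  have cube: "b + - (a * x) = x ^ 3" and linear: "b + - (x ^ 3) = a * x"
    by (simp_all add: eq[symmetric])
  have "min (val3 (x ^ 3)) (val3 (a * x)) \<le> val3 b"
    using val3_add_ge[OF nonzero] eq assms(2) by simp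
  moreover have "min (val3 b) (val3 (a * x)) \<le> val3 (x ^ 3)"
    using val3_add_ge[of b "- (a * x)"] nonzero assms(2) unfolding cube by (simp add: val3_uminus)
  moreover have "min (val3 b) (val3 (x ^ 3)) \<le> val3 (a * x)"
    using val3_add_ge[of b "- (x ^ 3)"] nonzero assms(2) unfolding linear by (simp add: val3_uminus)
  ultimately show False
    using assms(3) unfolding val_cube val_ax min_def by (auto split: if_splits)
qed

end
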